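(* Let $S$ be an instance of 3-Partition (with $n_1\ge\cdots\ge n_{3m}$) and $w_S$ as defined below. Every accepting computation $\varepsilon\,\|\,w_S\vdash^*\varepsilon\,\|\,\varepsilon$ satisfies the V-Condition: for each $\ell$ with $1\le\ell\le 12m$, the symbols of the second occurrence of $v_\ell$ in $w_S$ are all matched against the corresponding symbols of the first occurrence of $v_\ell$ in $w_S$.
   Context: Queue automaton: a configuration is written $Q\,\|\,x$ ($Q$ = queue contents, $x$ = remaining input); a step from $Q\,\|\,\sigma x$ ($\sigma$ a symbol) goes either to $Q\sigma\,\|\,x$ (push the input symbol) or, if $Q=\sigma Q'$, to $Q'\,\|\,x$ (the input symbol is matched against the leftmost queue symbol, which is popped; that queue symbol was pushed from an earlier input position and the two occurrences are said to be matched). $\vdash^*$ is zero or more steps; $\varepsilon$ is the empty string; an accepting computation of $w$ is a computation $\varepsilon\,\|\,w\vdash^*\varepsilon\,\|\,\varepsilon$. An instance of 3-Partition is a sequence $S=\langle n_i:1\le i\le 3m\rangle$ of natural numbers such that $B=(\sum_{i=1}^{3m}n_i)/m$ is an integer and $B/4<n_i<B/2$ for all $i$; throughout, the $n_i$ are in non-increasing order. Alphabet $\{a_1,a_2,b,e_0,e,c_1,c_2,x,y\}$; $u^i$ is $i$ copies of $u$ concatenated, $\prod_{\ell=1}^k u_\ell=u_1\cdots u_k$. Define $U_\ell=a_1^2b^\ell a_2^2$, $v_\ell=c_1x^\ell y^\ell c_2$, $D_k=U_{n_k}^{3m-k+1}$, $E_k=U_B^{3m-k}\,a_1b^{n_k}a_2\,U_B^{3m-k}$,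 $F_k=U_B^{2(3m-k)}$, $\mathrm{Load}_S=e_0\prod_{i=1}^m(b^{2B}e)$, $\mathrm{Dist}_S=e_0\prod_{i=1}^m((a_1b^Ba_2)^3e)$, $\mathrm{Ver}_S=\prod_{k=1}^{3m}[v_{4k-3}D_kv_{4k-3}\,v_{4k-2}D_kv_{4k-2}\,v_{4k-1}E_kv_{4k-1}\,v_{4k}F_kv_{4k}]$, $w_S=\mathrm{Load}_S\mathrm{Dist}_S\mathrm{Ver}_S$. Each $v_\ell$ ($1\le\ell\le12m$) occurs exactly twice in $w_S$. *)

theory Defs
  imports Complex_Main
begin

text \<open>Queue contents are recorded as lists of input positions (0-based) of the word w;
  the symbol of a queue entry q is w!q.  A configuration is (Q, i): queue Q and
  i input symbols already consumed (remaining input = drop i w).\<close>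

inductive qstep :: "'s list \<Rightarrow> nat list \<times> nat \<Rightarrow> nat list \<times> nat \<Rightarrow> bool" for w where
  push: "i < length w \<Longrightarrow> qstep w (Q, i) (Q @ [i], Suc i)"
| pop:  "i < length w \<Longrightarrow> w ! q = w ! i \<Longrightarrow> qstep w (q # Q, i) (Q, Suc i)"

definition accepting_comp :: "'s list \<Rightarrow> (nat list \<times> nat) list \<Rightarrow> bool" where
  "accepting_comp w cs \<longleftrightarrow> cs \<noteq> [] \<and> hd cs = ([], 0) \<and> last cs = ([], length w) \<and>
     (\<forall>k. Suc k < length cs \<longrightarrow> qstep w (cs ! k) (cs ! Suc k))"

definition matched :: "(nat list \<times> nat) list \<Rightarrow> nat \<Rightarrow> nat \<Rightarrow> bool" where
  "matched cs i j \<longleftrightarrow> (\<exists>k. Suc k < length cs \<and> snd (cs ! k) = j \<and>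
       fst (cs ! k) = i # fst (cs ! Suc k))"

text \<open>ns = <n_1,...,n_{3m}> (n_k = ns!(k-1)), non-increasing.\<close>
definition three_partition_instance :: "nat \<Rightarrow> nat list \<Rightarrow> bool" where
  "three_partition_instance m ns \<longleftrightarrow> m > 0 \<and> length ns = 3 * m \<and> m dvd sum_list ns \<and>
     (\<forall>i < length ns. real (sum_list ns div m) / 4 < real (ns ! i) \<and>
                      real (ns ! i) < real (sum_list ns div m) / 2) \<and>
     sorted_wrt (\<ge>) ns"

definition bound_B :: "nat \<Rightarrow> nat list \<Rightarrow> nat" where
  "bound_B m ns = sum_list ns div m"

datatype sym = SA1 | SA2 | SB | SE0 | SE | SC1 | SC2 | SX | SY

definition pw :: "'a list \<Rightarrow> nat \<Rightarrow> 'a list" where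
  "pw u i = concat (replicate i u)"

definition U_blk :: "nat \<Rightarrow> sym list" where
  "U_blk l = [SA1, SA1] @ replicate l SB @ [SA2, SA2]"

definition v_blk :: "nat \<Rightarrow> sym list" where
  "v_blk l = [SC1] @ replicate l SX @ replicate l SY @ [SC2]"

definition nk :: "nat list \<Rightarrow> nat \<Rightarrow> nat" where
  "nk ns k = ns ! (k - 1)"

definition D_blk :: "nat \<Rightarrow> nat list \<Rightarrow> nat \<Rightarrow> sym list" where
  "D_blk m ns k = pw (U_blk (nk ns k)) (3 * m - k + 1)"

definition E_blk :: "nat \<Rightarrow> nat list \<Rightarrow> nat \<Rightarrow> sym list" where
  "E_blk m ns k = pw (U_blk (bound_B m ns)) (3 * m - k) @ [SA1] @ replicate (nk ns k) SB @ [SA2]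
                  @ pw (U_blk (bound_B m ns)) (3 * m - k)"

definition F_blk :: "nat \<Rightarrow> nat list \<Rightarrow> nat \<Rightarrow> sym list" where
  "F_blk m ns k = pw (U_blk (bound_B m ns)) (2 * (3 * m - k))"

definition Load :: "nat \<Rightarrow> nat list \<Rightarrow> sym list" where
  "Load m ns = [SE0] @ concat (map (\<lambda>i. replicate (2 * bound_B m ns) SB @ [SE]) [1..<m+1])"

definition Dist :: "nat \<Rightarrow> nat list \<Rightarrow> sym list" where
  "Dist m ns = [SE0] @ concat (map (\<lambda>i. pw ([SA1] @ replicate (bound_B m ns) SB @ [SA2]) 3 @ [SE])
                                  [1..<m+1])"

definition Ver :: "nat \<Rightarrow> nat list \<Rightarrow> sym list" where
  "Ver m ns = concat (map (\<lambda>k.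
       v_blk (4*k-3) @ D_blk m ns k @ v_blk (4*k-3) @
       v_blk (4*k-2) @ D_blk m ns k @ v_blk (4*k-2) @
       v_blk (4*k-1) @ E_blk m ns k @ v_blk (4*k-1) @
       v_blk (4*k)   @ F_blk m ns k @ v_blk (4*k)) [1..<3*m+1])"

definition w_S :: "nat \<Rightarrow> nat list \<Rightarrow> sym list" where
  "w_S m ns = Load m ns @ Dist m ns @ Ver m ns"

definition occs :: "'a list \<Rightarrow> 'a list \<Rightarrow> nat set" where
  "occs u w = {p. p + length u \<le> length w \<and> take (length u) (drop p w) = u}"

definition first_occ :: "'a list \<Rightarrow> 'a list \<Rightarrow> nat" where
  "first_occ u w = Min (occs u w)"

definition second_occ :: "'a list \<Rightarrow> 'a list \<Rightarrow> nat" where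
  "second_occ u w = Min (occs u w - {first_occ u w})"

definition V_condition :: "nat \<Rightarrow> nat list \<Rightarrow> (nat list \<times> nat) list \<Rightarrow> bool" where
  "V_condition m ns cs \<longleftrightarrow>
     (\<forall>l. 1 \<le> l \<and> l \<le> 12 * m \<longrightarrow>
        (\<forall>j < length (v_blk l).
           matched cs (first_occ (v_blk l) (w_S m ns) + j) (second_occ (v_blk l) (w_S m ns) + j)))"

end

theory Submission
  imports Defs
begin

text \<open>Project an accepting computation onto the symbols \<open>c\<^sub>1, c\<^sub>2, x, y\<close> of the words \<open>v\<^sub>l\<close>:
  queue entries holding them are only ever matched against each other, so they form a run of a
  queue automaton on \<open>v\<^sub>1 v\<^sub>1 v\<^sub>2 v\<^sub>2 \<dots> v\<^sub>1\<^sub>2\<^sub>m v\<^sub>1\<^sub>2\<^sub>m\<close>. A nonempty queue at the start of block \<open>l\<close>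
  has a rigid shape (\<open>c\<^sub>1\<close> is followed by \<open>x\<close>, \<open>x\<close> by \<open>x\<close> or \<open>y\<close>, it ends in \<open>y\<close> or \<open>c\<^sub>2\<close>,
  it holds an even number of \<open>c\<^sub>2\<close>) and all its runs of \<open>x\<close> and of \<open>y\<close> are shorter than \<open>l\<close>.
  Reading \<open>v\<^sub>l v\<^sub>l\<close> cannot absorb the runs \<open>x\<^sup>l\<close>, \<open>y\<^sup>l\<close> by matching, and the shape is restored
  for \<open>l + 1\<close>; so the queue never becomes empty again. As an accepting computation ends with the
  empty queue, the queue is empty at the start of every block; then the first \<open>v\<^sub>l\<close> is pushed
  completely and popped, symbol by symbol, by the second.\<close>

section \<open>Queue runs on words\<close>

inductive queue_run :: "'a list \<Rightarrow> 'a list \<Rightarrow> 'a list \<Rightarrow> bool" where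
  nil: "queue_run Q [] Q"
| push: "queue_run (Q @ [c]) z Q' \<Longrightarrow> queue_run Q (c # z) Q'"
| pop: "queue_run Q z Q' \<Longrightarrow> queue_run (c # Q) (c # z) Q'"

lemma queue_run_Nil_iff: "queue_run Q [] Q' \<longleftrightarrow> Q' = Q"
  by (auto elim: queue_run.cases intro: queue_run.nil)

lemma queue_run_Cons_iff:
  "queue_run Q (c # z) Q' \<longleftrightarrow> queue_run (Q @ [c]) z Q' \<or> (\<exists>Q0. Q = c # Q0 \<and> queue_run Q0 z Q')"
  by (auto elim: queue_run.cases intro: queue_run.intros)

lemma queue_run_append_iff:
  "queue_run Q (z1 @ z2) Q2 \<longleftrightarrow> (\<exists>Q1. queue_run Q z1 Q1 \<and> queue_run Q1 z2 Q2)"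
  by (induction z1 arbitrary: Q) (auto simp: queue_run_Nil_iff queue_run_Cons_iff)

lemma queue_run_single_iff: "queue_run Q [c] Q' \<longleftrightarrow> Q' = Q @ [c] \<or> Q = c # Q'"
  by (auto simp: queue_run_Cons_iff queue_run_Nil_iff)

lemma queue_run_replicate:
  "queue_run Q (replicate n c) Q' \<Longrightarrow> \<exists>p\<le>n. Q @ replicate (n - p) c = replicate p c @ Q'"
proof (induction n arbitrary: Q)
  case 0
  thus ?case by (simp add: queue_run_Nil_iff)
next
  case (Suc n)
  from Suc.prems consider "queue_run (Q @ [c]) (replicate n c) Q'"
    | Q0 where "Q = c # Q0" "queue_run Q0 (replicate n c) Q'"
    by (auto simp: queue_run_Cons_iff)
  thus ?case
  proof cases
    case 1
    then obtain p where "p \<le> n" "Q @ c # replicate (n - p) c = replicate p c @ Q'"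
      using Suc.IH by fastforce
    thus ?thesis by (intro exI[of _ p]) (simp add: Suc_diff_le)
  next
    case 2
    then obtain p where "p \<le> n" "Q0 @ replicate (n - p) c = replicate p c @ Q'"
      using Suc.IH by blast
    thus ?thesis using 2 by (intro exI[of _ "Suc p"]) auto
  qed
qed

text \<open>Every input symbol is either pushed or matched against an equal queue symbol.\<close>

lemma queue_run_count_even:
  "queue_run Q z Q' \<Longrightarrow> even (count_list Q' d + count_list Q d + count_list z d)"
  by (induction rule: queue_run.induct) auto

lemma append_eq_replicate_append:
  assumes "A @ B = replicate q d @ C" and "(\<exists>z\<in>set A. z \<noteq> d) \<or> (B \<noteq> [] \<and> hd B \<noteq> d)"
  shows "\<exists>A'. A = replicate q d @ A' \<and> C = A' @ B"
proof (cases "q \<le> length A")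
  case True
  have "take q A = replicate q d" "drop q A @ B = C"
    using arg_cong[OF assms(1), of "take q"] arg_cong[OF assms(1), of "drop q"] True by simp_all
  thus ?thesis by (metis append_take_drop_id)
next
  case False
  have "take (length A) (A @ B) = take (length A) (replicate q d @ C)" using assms(1) by simp
  hence "A = replicate (length A) d" using False by simp
  hence A: "\<forall>z\<in>set A. z = d" by (metis in_set_replicate)
  have "hd B = d" if "B \<noteq> []"
  proof -
    have "(A @ B) ! length A = hd B" using that by (simp add: nth_append hd_conv_nth)
    moreover have "(replicate q d @ C) ! length A = d" using False by (simp add: nth_append)
    ultimately show "hd B = d" using assms(1) by simp
  qed
  thus ?thesis using assms(2) A by blast
qed

lemma append_eq_replicate_append_hd:
  "Z @ W1 = replicate p c @ W \<Longrightarrow> Z \<noteq> [] \<Longrightarrow> hd Z \<noteq> c \<Longrightarrow> p = 0 \<and> W = Z @ W1"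
  by (cases p; cases Z) auto

lemma queue_run_v_blkE:
  assumes "queue_run S (v_blk L) S'"
  obtains S1 S2 S3 p q where "S1 = S @ [SC1] \<or> S = SC1 # S1"
    "p \<le> L" "S1 @ replicate (L - p) SX = replicate p SX @ S2"
    "q \<le> L" "S2 @ replicate (L - q) SY = replicate q SY @ S3"
    "S' = S3 @ [SC2] \<or> S3 = SC2 # S'"
proof -
  have "queue_run S ([SC1] @ replicate L SX @ replicate L SY @ [SC2]) S'"
    using assms by (simp add: v_blk_def)
  then obtain S1 S2 S3 where "queue_run S [SC1] S1" "queue_run S1 (replicate L SX) S2"
    "queue_run S2 (replicate L SY) S3" "queue_run S3 [SC2] S'"
    unfolding queue_run_append_iff by blast
  thus ?thesis
    using that queue_run_replicate queue_run_single_iff by metis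
qed

section \<open>Shapes of queues of \<open>v\<close>-symbols\<close>

definition adj_ok :: "sym \<Rightarrow> sym \<Rightarrow> bool" where
  "adj_ok c d \<longleftrightarrow> (c = SC1 \<longrightarrow> d = SX) \<and> (c = SX \<longrightarrow> d = SX \<or> d = SY)"

definition well_shaped :: "sym list \<Rightarrow> bool" where
  "well_shaped Q \<longleftrightarrow> successively adj_ok Q \<and> (Q \<noteq> [] \<longrightarrow> last Q = SY \<or> last Q = SC2)"

text \<open>\<open>runs_le n k c Q\<close>: every maximal run of \<open>c\<close> in \<open>Q\<close> has length at most \<open>n\<close>, the leading run
  being extended by \<open>k\<close> copies of \<open>c\<close> that precede \<open>Q\<close>.\<close>

fun runs_le :: "nat \<Rightarrow> nat \<Rightarrow> 'a \<Rightarrow> 'a list \<Rightarrow> bool" where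
  "runs_le n k c [] = True"
| "runs_le n k c (d # Q) = (if d = c then Suc k \<le> n \<and> runs_le n (Suc k) c Q else runs_le n 0 c Q)"

definition xy_runs_le :: "nat \<Rightarrow> sym list \<Rightarrow> bool" where
  "xy_runs_le n Q \<longleftrightarrow> runs_le n 0 SX Q \<and> runs_le n 0 SY Q"

definition strip_C1 :: "sym list \<Rightarrow> sym list" where
  "strip_C1 Q = (if Q \<noteq> [] \<and> hd Q = SC1 then tl Q else Q)"

definition short_front :: "nat \<Rightarrow> sym list \<Rightarrow> bool" where
  "short_front L Q \<longleftrightarrow> length (takeWhile (\<lambda>z. z = SX) Q) < L \<and>
      length (takeWhile (\<lambda>z. z = SY) (dropWhile (\<lambda>z. z = SX) Q)) < L"

lemma adj_ok_simps [simp]: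
  "adj_ok c SX" "adj_ok SY d" "adj_ok SC2 d" "adj_ok SX SY"
  "adj_ok SC1 d \<longleftrightarrow> d = SX" "adj_ok SX d \<longleftrightarrow> d = SX \<or> d = SY"
  by (auto simp: adj_ok_def)

lemma successively_replicate: "P c c \<Longrightarrow> successively P (replicate n c)"
proof (induction n)
  case (Suc n) thus ?case by (cases n) (auto simp: successively_Cons)
qed simp

lemma successively_replicate_append:
  "P c c \<Longrightarrow> (0 < n \<Longrightarrow> R \<noteq> [] \<Longrightarrow> P c (hd R)) \<Longrightarrow> successively P R \<Longrightarrow>
   successively P (replicate n c @ R)"
proof (induction n)
  case (Suc n) thus ?case by (cases n; cases R) (auto simp: successively_Cons)
qed simp

lemma successively_drop: "successively P xs \<Longrightarrow> successively P (drop i xs)"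
  by (metis append_take_drop_id successively_append_iff)

lemma not_successively_replicate_SX_SC2: "successively adj_ok (replicate p SX @ [SC2]) \<Longrightarrow> p = 0"
proof (induction p)
  case (Suc p) thus ?case by (cases p) (auto simp: successively_Cons)
qed simp

lemma runs_le_replicate_same:
  "runs_le n k c (replicate m c @ Q) \<longleftrightarrow> (m = 0 \<or> k + m \<le> n) \<and> runs_le n (k + m) c Q"
  by (induction m arbitrary: k) auto

lemma runs_le_replicate_other:
  "d \<noteq> c \<Longrightarrow> runs_le n 0 c (replicate m d @ Q) \<longleftrightarrow> runs_le n 0 c Q"
  by (induction m) auto

lemma runs_le_replicate_other_pos:
  "d \<noteq> c \<Longrightarrow> 0 < m \<Longrightarrow> runs_le n k c (replicate m d @ Q) \<longleftrightarrow> runs_le n 0 c Q"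
  by (cases m) (auto simp: runs_le_replicate_other)

lemma runs_le_append_Cons_other:
  "d \<noteq> c \<Longrightarrow> runs_le n k c (Q @ d # R) \<longleftrightarrow> runs_le n k c Q \<and> runs_le n 0 c R"
  by (induction Q arbitrary: k) auto

lemma runs_le_append_replicate_other:
  assumes "d \<noteq> c" "0 < m"
  shows "runs_le n k c (Q @ replicate m d @ R) \<longleftrightarrow> runs_le n k c Q \<and> runs_le n 0 c R"
proof -
  obtain m' where "m = Suc m'" using assms(2) by (cases m) auto
  hence "runs_le n k c (Q @ replicate m d @ R) \<longleftrightarrow> runs_le n k c Q \<and> runs_le n 0 c (replicate m' d @ R)"
    using assms(1) by (simp add: runs_le_append_Cons_other)
  thus ?thesis using assms(1) by (simp add: runs_le_replicate_other)
qed

lemma runs_le_append_last_other: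
  "Q \<noteq> [] \<Longrightarrow> last Q \<noteq> c \<Longrightarrow> runs_le n k c (Q @ R) \<longleftrightarrow> runs_le n k c Q \<and> runs_le n 0 c R"
proof (induction Q arbitrary: k)
  case (Cons d Q)
  thus ?case by (cases "Q = []") auto
qed simp

lemma runs_le_antimono: "runs_le n k c Q \<Longrightarrow> j \<le> k \<Longrightarrow> runs_le n j c Q"
  by (induction Q arbitrary: k j) (auto split: if_splits)

lemma runs_le_mono: "runs_le n k c Q \<Longrightarrow> n \<le> n' \<Longrightarrow> runs_le n' k c Q"
  by (induction Q arbitrary: k) (auto split: if_splits)

lemma runs_le_drop: "runs_le n k c Q \<Longrightarrow> runs_le n 0 c (drop i Q)"
proof (induction Q arbitrary: i k)
  case (Cons d Q)
  show ?case
  proof (cases i)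
    case 0 thus ?thesis using runs_le_antimono[OF Cons.prems, of 0] by simp
  next
    case (Suc i')
    have "runs_le n (if d = c then Suc k else 0) c Q" using Cons.prems by (simp split: if_splits)
    thus ?thesis using Cons.IH Suc by simp
  qed
qed simp

lemma runs_le_replicate_le: "runs_le n 0 c (replicate m c @ Q) \<Longrightarrow> m \<le> n"
  by (auto simp: runs_le_replicate_same)

lemma runs_le_takeWhile: "runs_le n 0 c Q \<Longrightarrow> length (takeWhile (\<lambda>z. z = c) Q) \<le> n"
proof -
  assume a: "runs_le n 0 c Q"
  have "takeWhile (\<lambda>z. z = c) Q = replicate (length (takeWhile (\<lambda>z. z = c) Q)) c"
    by (metis (mono_tags, lifting) replicate_length_same set_takeWhileD)
  hence "Q = replicate (length (takeWhile (\<lambda>z. z = c) Q)) c @ dropWhile (\<lambda>z. z = c) Q"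
    by (metis takeWhile_dropWhile_id)
  thus ?thesis using a runs_le_replicate_le by metis
qed

lemma xy_runs_le_drop: "xy_runs_le n Q \<Longrightarrow> xy_runs_le n (drop i Q)"
  by (auto simp: xy_runs_le_def intro: runs_le_drop)

lemma xy_runs_le_mono: "xy_runs_le n Q \<Longrightarrow> n \<le> n' \<Longrightarrow> xy_runs_le n' Q"
  by (auto simp: xy_runs_le_def intro: runs_le_mono)

lemma xy_runs_le_snoc_C1: "xy_runs_le n (Q @ [SC1]) \<longleftrightarrow> xy_runs_le n Q"
  using runs_le_append_Cons_other[of SC1 _ n 0 Q "[]"] by (simp add: xy_runs_le_def)

lemma takeWhile_eq_replicate_append:
  "takeWhile (\<lambda>z. z = c) (replicate p c @ R) = replicate p c @ takeWhile (\<lambda>z. z = c) R"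
  by (induction p) auto

lemma dropWhile_eq_replicate_append:
  "dropWhile (\<lambda>z. z = c) (replicate p c @ R) = dropWhile (\<lambda>z. z = c) R"
  by (induction p) auto

lemma short_front_replicate_SX: "short_front L (replicate p SX @ R) \<Longrightarrow> p < L"
  by (simp add: short_front_def takeWhile_eq_replicate_append)

lemma short_front_replicate_SY: "short_front L (replicate p SX @ replicate q SY @ D) \<Longrightarrow> q < L"
  by (cases q)
    (auto simp: short_front_def takeWhile_eq_replicate_append dropWhile_eq_replicate_append)

lemma short_front_pos: "short_front L Q \<Longrightarrow> 0 < L"
  by (simp add: short_front_def)

lemma xy_runs_le_short_front: "xy_runs_le n Q \<Longrightarrow> n < L \<Longrightarrow> short_front L Q"
proof -
  assume r: "xy_runs_le n Q" and n: "n < L"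
  have "xy_runs_le n (dropWhile (\<lambda>z. z = SX) Q)"
    using r by (simp add: dropWhile_eq_drop xy_runs_le_drop)
  thus ?thesis using r n by (auto simp: short_front_def xy_runs_le_def dest!: runs_le_takeWhile)
qed

lemma short_front_append:
  assumes "\<exists>z\<in>set E. z \<noteq> SX" and "R = [] \<or> hd R \<noteq> SY"
  shows "short_front L (E @ R) \<longleftrightarrow> short_front L E"
proof -
  have "takeWhile (\<lambda>z. z = SX) (E @ R) = takeWhile (\<lambda>z. z = SX) E"
    "dropWhile (\<lambda>z. z = SX) (E @ R) = dropWhile (\<lambda>z. z = SX) E @ R"
    using assms(1) by (auto simp: takeWhile_append dropWhile_append)
  moreover have "takeWhile (\<lambda>z. z = SY) (D @ R) = takeWhile (\<lambda>z. z = SY) D" for D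
    using assms(2) by (cases R) (auto simp: takeWhile_append takeWhile_eq_all_conv[THEN iffD2])
  ultimately show ?thesis by (simp add: short_front_def)
qed

lemma short_front_replicate:
  "a < L \<Longrightarrow> b < L \<Longrightarrow> Bend = [] \<or> Bend = [SC2] \<Longrightarrow>
   short_front L (replicate a SX @ replicate b SY @ Bend)"
  by (cases b) (auto simp: short_front_def takeWhile_eq_replicate_append dropWhile_eq_replicate_append)

lemma short_front_after_C1:
  assumes "S \<noteq> []" "last S \<noteq> SX" "short_front L (strip_C1 S)" "S1 = S @ [SC1] \<or> S = SC1 # S1"
  shows "short_front L S1"
  using assms(4)
proof
  assume S1: "S1 = S @ [SC1]"
  show ?thesis
  proof (cases "hd S = SC1")
    case True
    thus ?thesis using S1 assms(1) short_front_pos[OF assms(3)]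
      by (cases S) (auto simp: short_front_def)
  next
    case False
    have "\<exists>z\<in>set S. z \<noteq> SX" using assms(1,2) last_in_set by metis
    thus ?thesis using S1 False assms(3) short_front_append[of S "[SC1]"] by (simp add: strip_C1_def)
  qed
qed (use assms(3) in \<open>simp add: strip_C1_def\<close>)

lemma queue_after_C1:
  assumes "S \<noteq> []" "well_shaped S" "xy_runs_le n S" "S1 = S @ [SC1] \<or> S = SC1 # S1"
  shows "S1 \<noteq> []" "successively adj_ok S1" "xy_runs_le n S1" "last S1 \<noteq> SX"
proof -
  have l: "last S = SY \<or> last S = SC2" and s: "successively adj_ok S"
    using assms(1,2) by (auto simp: well_shaped_def)
  show "S1 \<noteq> []" "last S1 \<noteq> SX" using assms(1,4) l by (auto split: if_split_asm)
  show "successively adj_ok S1"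
    using assms(1,4) s l by (auto simp: successively_append_iff successively_Cons)
  show "xy_runs_le n S1"
    using assms(3,4) xy_runs_le_snoc_C1 xy_runs_le_drop[of n S 1] by auto
qed

lemma queue_run_v_blk_short_frontE:
  assumes S: "S \<noteq> []" "last S = SY \<or> last S = SC2" and front: "short_front L (strip_C1 S)"
    and run: "queue_run S (v_blk L) S'"
  obtains S1 p q C E Bend where "S1 = S @ [SC1] \<or> S = SC1 # S1" "p < L" "q < L"
    "S1 = replicate p SX @ replicate q SY @ C @ E"
    "S' = E @ replicate (L - p) SX @ replicate (L - q) SY @ Bend"
    "C = [] \<and> Bend = [SC2] \<or> C = [SC2] \<and> Bend = []"
proof -
  obtain S1 S2 S3 p q where A: "S1 = S @ [SC1] \<or> S = SC1 # S1"
    and X: "S1 @ replicate (L - p) SX = replicate p SX @ S2"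
    and Y: "S2 @ replicate (L - q) SY = replicate q SY @ S3"
    and B: "S' = S3 @ [SC2] \<or> S3 = SC2 # S'"
    by (rule queue_run_v_blkE[OF run])
  have "S1 \<noteq> []" "last S1 \<noteq> SX" using A S by (auto split: if_split_asm)
  hence "\<exists>z\<in>set S1. z \<noteq> SX" using last_in_set by metis
  then obtain R where R: "S1 = replicate p SX @ R" "S2 = R @ replicate (L - p) SX"
    using append_eq_replicate_append[OF X] by blast
  have fS1: "short_front L S1" using short_front_after_C1[OF _ _ front A] S by auto
  hence pL: "p < L" using R(1) short_front_replicate_SX by blast
  have "R @ (replicate (L - p) SX @ replicate (L - q) SY) = replicate q SY @ S3" using Y R(2) by simp
  moreover have "replicate (L - p) SX @ replicate (L - q) SY \<noteq> []"
    "hd (replicate (L - p) SX @ replicate (L - q) SY) \<noteq> SY" using pL by simp_all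
  ultimately obtain D where D: "R = replicate q SY @ D" "S3 = D @ replicate (L - p) SX @ replicate (L - q) SY"
    using append_eq_replicate_append[of R "replicate (L - p) SX @ replicate (L - q) SY" q SY S3]
    by blast
  have qL: "q < L" using fS1 R(1) D(1) short_front_replicate_SY by simp
  from B show ?thesis
  proof
    assume "S' = S3 @ [SC2]"
    thus ?thesis using that[of S1 p q "[]" D "[SC2]"] A pL qL R(1) D by simp
  next
    assume S3: "S3 = SC2 # S'"
    then obtain E where "D = SC2 # E" "S' = E @ replicate (L - p) SX @ replicate (L - q) SY"
      using D(2) pL by (cases D; cases "L - p") auto
    thus ?thesis using that[of S1 p q "[SC2]" E "[]"] A pL qL R(1) D(1) by simp
  qed
qed

lemma well_shaped_after_v_blk:
  assumes E: "successively adj_ok E" "xy_runs_le L E" "E \<noteq> [] \<Longrightarrow> last E \<noteq> SX"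
    and ij: "0 < i" "i \<le> L" "0 < j" "j \<le> L" and Bend: "Bend = [] \<or> Bend = [SC2]"
  shows "well_shaped (E @ replicate i SX @ replicate j SY @ Bend)"
    and "xy_runs_le L (E @ replicate i SX @ replicate j SY @ Bend)"
proof -
  have "successively adj_ok (replicate i SX @ replicate j SY @ Bend)"
    using ij Bend by (auto intro!: successively_replicate_append successively_replicate)
  thus "well_shaped (E @ replicate i SX @ replicate j SY @ Bend)"
    using E(1) ij Bend by (auto simp: well_shaped_def successively_append_iff)
  have X: "runs_le L 0 SX (replicate i SX @ replicate j SY @ Bend)"
    using ij Bend by (auto simp: runs_le_replicate_same runs_le_replicate_other_pos)
  have "runs_le L 0 SX (E @ replicate i SX @ replicate j SY @ Bend)"
    using X E(2,3) by (cases "E = []") (auto simp: runs_le_append_last_other xy_runs_le_def)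
  moreover have "runs_le L 0 SY (E @ replicate i SX @ replicate j SY @ Bend)"
    using E(2) ij Bend by (auto simp: runs_le_append_replicate_other runs_le_replicate_same xy_runs_le_def)
  ultimately show "xy_runs_le L (E @ replicate i SX @ replicate j SY @ Bend)"
    by (simp add: xy_runs_le_def)
qed

lemma queue_run_v_blk_short_front:
  assumes S: "S \<noteq> []" "well_shaped S" "xy_runs_le L S" and front: "short_front L (strip_C1 S)"
    and run: "queue_run S (v_blk L) S'"
  shows "S' \<noteq> [] \<and> well_shaped S' \<and> xy_runs_le L S'"
proof -
  have l: "last S = SY \<or> last S = SC2" using S(1,2) by (simp add: well_shaped_def)
  obtain S1 p q C E Bend where A: "S1 = S @ [SC1] \<or> S = SC1 # S1" and pq: "p < L" "q < L"
    and S1: "S1 = replicate p SX @ replicate q SY @ C @ E"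
    and S': "S' = E @ replicate (L - p) SX @ replicate (L - q) SY @ Bend"
    and CB: "C = [] \<and> Bend = [SC2] \<or> C = [SC2] \<and> Bend = []"
    by (rule queue_run_v_blk_short_frontE[OF S(1) l front run])
  have E: "E = drop (p + q + length C) S1" using S1 by simp
  have S1p: "successively adj_ok S1" "xy_runs_le L S1" "last S1 \<noteq> SX"
    using queue_after_C1[OF S A] by simp_all
  have "successively adj_ok E" "xy_runs_le L E"
    unfolding E using S1p by (simp_all add: successively_drop xy_runs_le_drop)
  moreover have "last E \<noteq> SX" if "E \<noteq> []"
    using S1p(3) that unfolding E by simp
  moreover have "0 < L - p" "L - p \<le> L" "0 < L - q" "L - q \<le> L" "Bend = [] \<or> Bend = [SC2]"
    using pq CB by auto
  ultimately show ?thesis using well_shaped_after_v_blk S' by simp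
qed

text \<open>Nonempty queues of \<open>v\<close>-symbols satisfy \<open>block_inv L\<close> at the start of block \<open>L\<close> and
  \<open>half_block_inv L\<close> between its two copies of \<open>v\<^sub>L\<close>. The exceptional queue
  \<open>c\<^sub>1 x\<^sup>L y\<^sup>j c\<^sub>2\<close> is the only one whose \<open>x\<close>-run can absorb the \<open>x\<^sup>L\<close> of the next \<open>v\<^sub>L\<close>.\<close>

definition block_inv :: "nat \<Rightarrow> sym list \<Rightarrow> bool" where
  "block_inv L Q \<longleftrightarrow> Q \<noteq> [] \<and> well_shaped Q \<and> xy_runs_le (L - 1) Q \<and> even (count_list Q SC2)"

definition half_block_inv :: "nat \<Rightarrow> sym list \<Rightarrow> bool" where
  "half_block_inv L Q \<longleftrightarrow> Q \<noteq> [] \<and> well_shaped Q \<and> xy_runs_le L Q \<and> odd (count_list Q SC2) \<and>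
     (short_front L (strip_C1 Q) \<or> (\<exists>j<L. Q = SC1 # replicate L SX @ replicate j SY @ [SC2]))"

lemma block_inv_short_front:
  assumes "block_inv L S" "1 \<le> L"
  shows "short_front L (strip_C1 S)"
proof -
  have "strip_C1 S = drop (if S \<noteq> [] \<and> hd S = SC1 then 1 else 0) S"
    by (simp add: strip_C1_def drop_Suc)
  hence "xy_runs_le (L - 1) (strip_C1 S)"
    using assms(1) xy_runs_le_drop by (metis block_inv_def)
  thus ?thesis using assms(2) xy_runs_le_short_front by simp
qed

lemma short_front_drop_append:
  assumes "drop k S1 \<noteq> []" "last S1 \<noteq> SX" "xy_runs_le (L - 1) S1" "1 \<le> L"
    and "R = [] \<or> hd R \<noteq> SY"
  shows "short_front L (drop k S1 @ R)"
proof -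
  have "last (drop k S1) \<noteq> SX" using assms(1,2) by simp
  hence "\<exists>z\<in>set (drop k S1). z \<noteq> SX" using assms(1) last_in_set by metis
  moreover have "short_front L (drop k S1)"
    using xy_runs_le_short_front[OF xy_runs_le_drop[OF assms(3)]] assms(4) by simp
  ultimately show ?thesis using assms(5) short_front_append by blast
qed

lemma short_front_strip_C1_drop_append:
  assumes "drop k S1 \<noteq> []" "drop k S1 \<noteq> [SC1]" "last S1 \<noteq> SX" "xy_runs_le (L - 1) S1" "1 \<le> L"
    and "R = [] \<or> hd R \<noteq> SY"
  shows "short_front L (strip_C1 (drop k S1 @ R))"
proof (cases "hd (drop k S1) = SC1")
  case True
  have "tl (drop k S1) = drop (Suc k) S1" by (simp add: drop_Suc tl_drop)
  moreover have "drop (Suc k) S1 \<noteq> []" using assms(1,2) True calculation by (cases "drop k S1") auto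
  ultimately show ?thesis using short_front_drop_append[OF _ assms(3-6)] assms(1) True
    by (simp add: strip_C1_def)
next
  case False
  thus ?thesis using short_front_drop_append[OF assms(1) assms(3-6)] assms(1) by (simp add: strip_C1_def)
qed

lemma matched_queue_pos:
  assumes S: "well_shaped S" "S \<noteq> []" and A: "S1 = S @ [SC1] \<or> S = SC1 # S1"
    and S1: "S1 = replicate p SX @ replicate q SY @ C" and C: "C = [] \<or> C = [SC2]"
  shows "0 < p \<and> 0 < q"
proof -
  have l: "last S = SY \<or> last S = SC2" "successively adj_ok S" using S by (auto simp: well_shaped_def)
  have "SC1 \<notin> set S1" using S1 C by auto
  hence S1S: "S = SC1 # S1" using A by auto
  have "S1 \<noteq> []" using l(1) S1S by auto
  moreover have "hd S1 = SX" using l(2) S1S calculation by (simp add: successively_Cons)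
  ultimately have p: "0 < p" using S1 C by (cases p; cases q) auto
  have "q \<noteq> 0"
  proof
    assume "q = 0"
    hence "S = SC1 # replicate p SX @ C" using S1S S1 by simp
    thus False using C l p not_successively_replicate_SX_SC2[of p]
      by (auto simp: successively_Cons)
  qed
  thus ?thesis using p by simp
qed

lemma matched_queue_but_C1:
  assumes S: "well_shaped S" "S \<noteq> []" "even (count_list S SC2)"
    and A: "S1 = S @ [SC1] \<or> S = SC1 # S1"
    and S1: "S1 = replicate p SX @ replicate q SY @ C @ [SC1]"
    and CB: "C = [] \<and> Bend = [SC2] \<or> C = [SC2] \<and> Bend = []"
  shows "S = replicate p SX @ replicate q SY \<and> 0 < q \<and> Bend = [SC2]"
proof -
  have l: "last S = SY \<or> last S = SC2" using S by (simp add: well_shaped_def)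
  have "S \<noteq> SC1 # S1" using l S1 by auto
  hence S': "S = replicate p SX @ replicate q SY @ C" using A S1 by simp
  hence "C = [] \<and> Bend = [SC2]" using CB S(3) by auto
  moreover have "q \<noteq> 0"
  proof
    assume "q = 0"
    hence "S = replicate p SX" using S' calculation by simp
    moreover have "p \<noteq> 0" using S(2) calculation by auto
    ultimately show False using l by simp
  qed
  ultimately show ?thesis using S' by simp
qed

lemma C1_front_cases:
  assumes "p < L" "q < L" "0 < q"
  shows "short_front L (strip_C1 (SC1 # replicate (L - p) SX @ replicate (L - q) SY @ [SC2])) \<or>
    (\<exists>j<L. SC1 # replicate (L - p) SX @ replicate (L - q) SY @ [SC2] =
       SC1 # replicate L SX @ replicate j SY @ [SC2])"
proof (cases "p = 0")
  case True
  thus ?thesis using assms by (intro disjI2 exI[of _ "L - q"]) simp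
next
  case False
  hence "short_front L (replicate (L - p) SX @ replicate (L - q) SY @ [SC2])"
    using assms by (intro short_front_replicate) auto
  thus ?thesis by (simp add: strip_C1_def)
qed

lemma half_block_front:
  assumes inv: "block_inv L S" and L: "1 \<le> L" and run: "queue_run S (v_blk L) M"
  shows "short_front L (strip_C1 M) \<or> (\<exists>j<L. M = SC1 # replicate L SX @ replicate j SY @ [SC2])"
proof -
  have S: "S \<noteq> []" "well_shaped S" "xy_runs_le (L - 1) S" "even (count_list S SC2)"
    using inv by (simp_all add: block_inv_def)
  have l: "last S = SY \<or> last S = SC2" using S by (simp add: well_shaped_def)
  obtain S1 p q C E Bend where A: "S1 = S @ [SC1] \<or> S = SC1 # S1" and pq: "p < L" "q < L"
    and S1: "S1 = replicate p SX @ replicate q SY @ C @ E"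
    and M: "M = E @ replicate (L - p) SX @ replicate (L - q) SY @ Bend"
    and CB: "C = [] \<and> Bend = [SC2] \<or> C = [SC2] \<and> Bend = []"
    by (rule queue_run_v_blk_short_frontE[OF S(1) l block_inv_short_front[OF inv L] run])
  have S1p: "xy_runs_le (L - 1) S1" "last S1 \<noteq> SX"
    using queue_after_C1[OF S(1,2,3) A] by simp_all
  define rest where "rest = replicate (L - p) SX @ replicate (L - q) SY @ Bend"
  have rest: "hd rest = SX" "rest \<noteq> []" using pq by (simp_all add: rest_def)
  have E: "E = drop (p + q + length C) S1" using S1 by simp
  consider (nil) "E = []" | (other) "E \<noteq> []" "E \<noteq> [SC1]" | (only_C1) "E = [SC1]"
    by blast
  thus ?thesis
  proof cases
    case nil
    hence "0 < p \<and> 0 < q" using matched_queue_pos[OF S(2,1) A] S1 CB by auto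
    hence "L - p < L" "L - q < L" using pq by auto
    moreover have "strip_C1 M = rest" using nil M rest by (simp add: rest_def strip_C1_def)
    ultimately show ?thesis using short_front_replicate[of "L - p" L "L - q" Bend] CB
      by (auto simp: rest_def)
  next
    case other
    have "M = drop (p + q + length C) S1 @ rest" using M E by (simp add: rest_def)
    moreover have "rest = [] \<or> hd rest \<noteq> SY" using rest by simp
    ultimately show ?thesis
      using short_front_strip_C1_drop_append[OF other[unfolded E] S1p(2,1) L] by simp
  next
    case only_C1
    hence "S1 = replicate p SX @ replicate q SY @ C @ [SC1]" using S1 by simp
    hence Sq: "S = replicate p SX @ replicate q SY \<and> 0 < q \<and> Bend = [SC2]"
      using matched_queue_but_C1[OF S(2,1,4) A _ CB] by blast
    hence "M = SC1 # replicate (L - p) SX @ replicate (L - q) SY @ [SC2]"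
      using M only_C1 by simp
    thus ?thesis using C1_front_cases[OF pq] Sq by simp
  qed
qed

lemma half_block_inv_after_v_blk:
  assumes inv: "block_inv L S" and L: "1 \<le> L" and run: "queue_run S (v_blk L) M"
  shows "half_block_inv L M"
proof -
  have S: "S \<noteq> []" "well_shaped S" "xy_runs_le L S" "even (count_list S SC2)"
    using inv xy_runs_le_mono[of "L - 1" S L] by (auto simp: block_inv_def)
  have "M \<noteq> [] \<and> well_shaped M \<and> xy_runs_le L M"
    using queue_run_v_blk_short_front[OF S(1,2,3) block_inv_short_front[OF inv L] run] .
  moreover have "odd (count_list M SC2)"
    using queue_run_count_even[OF run, of SC2] S(4) by (simp add: v_blk_def)
  ultimately show ?thesis using half_block_front[OF assms] by (simp add: half_block_inv_def)
qed

lemma queue_run_Nil_v_blk: "queue_run [] (v_blk L) M \<Longrightarrow> M = v_blk L"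
proof -
  assume "queue_run [] (v_blk L) M"
  then obtain S1 S2 S3 p q where A: "S1 = [] @ [SC1] \<or> [] = SC1 # S1"
    and X: "S1 @ replicate (L - p) SX = replicate p SX @ S2"
    and Y: "S2 @ replicate (L - q) SY = replicate q SY @ S3"
    and B: "M = S3 @ [SC2] \<or> S3 = SC2 # M"
    by (rule queue_run_v_blkE)
  have "S1 = [SC1]" using A by simp
  hence "S2 = SC1 # replicate L SX" using append_eq_replicate_append_hd[OF X] by auto
  hence "S3 = SC1 # replicate L SX @ replicate L SY" using append_eq_replicate_append_hd[OF Y] by auto
  thus ?thesis using B by (auto simp: v_blk_def)
qed

lemma queue_after_SY_run:
  assumes S2: "S2 = replicate j SY @ [SC2]" and Y: "S2 @ replicate (L - q) SY = replicate q SY @ S3"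
    and B: "S' = S3 @ [SC2] \<or> S3 = SC2 # S'"
  shows "q \<le> j \<and> S' = (replicate (j - q) SY @ [SC2]) @ replicate (L - q) SY @ [SC2] \<or>
    S' = replicate (L - j) SY"
proof -
  obtain R2 where R2: "S2 = replicate q SY @ R2" "S3 = R2 @ replicate (L - q) SY"
    using append_eq_replicate_append[OF Y] S2 by auto
  have "replicate j SY = replicate q SY @ takeWhile (\<lambda>z. z = SY) R2"
    using arg_cong[OF R2(1), of "takeWhile (\<lambda>z. z = SY)"] S2
    by (simp add: takeWhile_eq_replicate_append)
  hence qj: "q \<le> j" by (metis le_add1 length_append length_replicate)
  have "R2 = drop q S2" using R2(1) by simp
  hence R2': "R2 = replicate (j - q) SY @ [SC2]" using S2 qj by simp
  from B show ?thesis
  proof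
    assume "S3 = SC2 # S'"
    hence "j = q \<and> S' = replicate (L - q) SY" using R2(2) R2' qj by (cases "j - q") auto
    thus ?thesis by simp
  qed (use qj R2(2) R2' in simp)
qed

text \<open>The runs from the exceptional queue \<open>c\<^sub>1 x\<^sup>L y\<^sup>j c\<^sub>2\<close>, which is \<open>v\<^sub>L\<close> itself for \<open>j = L\<close>.\<close>

lemma queue_run_v_blk_exceptionalE:
  assumes run: "queue_run (SC1 # replicate L SX @ replicate j SY @ [SC2]) (v_blk L) S'"
  obtains (pushed) "S' = (SC1 # replicate L SX @ replicate j SY @ [SC2]) @ v_blk L"
  | (x_pushed) p where "p < L"
      "S' = (replicate (L - p) SX @ replicate j SY @ [SC2]) @ replicate (L - p) SX @ replicate L SY @ [SC2]"
  | (c2_pushed) q where "q \<le> j" "S' = (replicate (j - q) SY @ [SC2]) @ replicate (L - q) SY @ [SC2]"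
  | (c2_popped) "S' = replicate (L - j) SY"
proof -
  define S where "S = SC1 # replicate L SX @ replicate j SY @ [SC2]"
  obtain S1 S2 S3 p q where A: "S1 = S @ [SC1] \<or> S = SC1 # S1" and pL: "p \<le> L"
    and X: "S1 @ replicate (L - p) SX = replicate p SX @ S2"
    and Y: "S2 @ replicate (L - q) SY = replicate q SY @ S3"
    and B: "S' = S3 @ [SC2] \<or> S3 = SC2 # S'"
    by (rule queue_run_v_blkE[OF run[folded S_def]])
  from A show ?thesis
  proof
    assume "S1 = S @ [SC1]"
    hence "S2 = S @ SC1 # replicate L SX" using append_eq_replicate_append_hd[OF X] S_def by simp
    hence "S3 = S @ SC1 # replicate L SX @ replicate L SY"
      using append_eq_replicate_append_hd[OF Y] S_def by simp
    thus ?thesis using B pushed S_def by (auto simp: v_blk_def)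
  next
    assume "S = SC1 # S1"
    hence S1: "S1 = replicate L SX @ replicate j SY @ [SC2]" using S_def by simp
    then obtain R where R: "S1 = replicate p SX @ R" "S2 = R @ replicate (L - p) SX"
      using append_eq_replicate_append[OF X] by auto
    have R': "R = replicate (L - p) SX @ replicate j SY @ [SC2]"
    proof -
      have "R = drop p S1" using R(1) by simp
      thus ?thesis using S1 pL by simp
    qed
    show ?thesis
    proof (cases "p < L")
      case True
      hence "S3 = S2 @ replicate L SY" using append_eq_replicate_append_hd[OF Y] R R' by simp
      hence "S' = S3 @ [SC2]" using B R R' True by (cases "L - p") auto
      thus ?thesis using x_pushed[OF True] \<open>S3 = S2 @ replicate L SY\<close> R R' by simp
    next
      case False
      hence "S2 = replicate j SY @ [SC2]" using R R' pL by simp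
      thus ?thesis using queue_after_SY_run[OF _ Y B] c2_pushed c2_popped by blast
    qed
  qed
qed

lemma block_inv_append:
  assumes E: "E \<noteq> []" "well_shaped E" "last E = SC2" "xy_runs_le L E"
    and E': "E' \<noteq> []" "well_shaped E'" "xy_runs_le L E'"
    and "even (count_list E SC2 + count_list E' SC2)"
  shows "block_inv (Suc L) (E @ E')"
proof -
  obtain E0 where E0: "E = E0 @ [SC2]" using E(1,3) by (metis append_butlast_last_id)
  have "xy_runs_le L (E0 @ SC2 # E')"
    using E(4) E'(3) E0 by (simp add: xy_runs_le_def runs_le_append_Cons_other)
  thus ?thesis using assms E0
    by (auto simp: block_inv_def well_shaped_def successively_append_iff successively_Cons)
qed

lemma xy_c2_props:
  assumes "i \<le> L" "j \<le> L" "0 < i \<Longrightarrow> 0 < j"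
  shows "well_shaped (replicate i SX @ replicate j SY @ [SC2])"
    and "xy_runs_le L (replicate i SX @ replicate j SY @ [SC2])"
proof -
  have "successively adj_ok (replicate j SY @ [SC2])"
    by (rule successively_replicate_append) auto
  thus "well_shaped (replicate i SX @ replicate j SY @ [SC2])"
    using assms(3) by (auto simp: well_shaped_def intro: successively_replicate_append)
  show "xy_runs_le L (replicate i SX @ replicate j SY @ [SC2])"
    using assms(1,2) by (cases j) (auto simp: xy_runs_le_def runs_le_replicate_same runs_le_replicate_other)
qed

lemma block_inv_xy_c2_pair:
  assumes "i \<le> L" "j \<le> L" "0 < i \<Longrightarrow> 0 < j" "i' \<le> L" "j' \<le> L" "0 < i' \<Longrightarrow> 0 < j'"
  shows "block_inv (Suc L)
           ((replicate i SX @ replicate j SY @ [SC2]) @ replicate i' SX @ replicate j' SY @ [SC2])"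
  using xy_c2_props[of i L j] xy_c2_props[of i' L j'] assms by (intro block_inv_append) auto

lemma C1_xy_c2_props:
  assumes "1 \<le> L" "0 < j" "j \<le> L"
  shows "well_shaped (SC1 # replicate L SX @ replicate j SY @ [SC2])"
    and "xy_runs_le L (SC1 # replicate L SX @ replicate j SY @ [SC2])"
  using xy_c2_props[of L L j] assms
  by (auto simp: well_shaped_def successively_Cons xy_runs_le_def)

lemma block_inv_replicate_SY: "0 < m \<Longrightarrow> m \<le> L \<Longrightarrow> block_inv (Suc L) (replicate m SY)"
  using runs_le_replicate_same[of L 0 SY m "[]"] runs_le_replicate_other[of SY SX L m "[]"]
  by (auto simp: block_inv_def well_shaped_def xy_runs_le_def intro: successively_replicate)

lemma block_inv_after_exceptional:
  assumes j: "1 \<le> j" "j \<le> L"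
    and run: "queue_run (SC1 # replicate L SX @ replicate j SY @ [SC2]) (v_blk L) S'"
  shows "block_inv (Suc L) S' \<or> (S' = [] \<and> j = L)"
  using run
proof (cases rule: queue_run_v_blk_exceptionalE)
  case pushed
  have "block_inv (Suc L) ((SC1 # replicate L SX @ replicate j SY @ [SC2]) @
                            (SC1 # replicate L SX @ replicate L SY @ [SC2]))"
    using C1_xy_c2_props[of L j] C1_xy_c2_props[of L L] j by (intro block_inv_append) auto
  thus ?thesis using pushed by (simp add: v_blk_def)
next
  case (x_pushed p)
  thus ?thesis using block_inv_xy_c2_pair[of "L - p" L j "L - p" L] j by simp
next
  case (c2_pushed q)
  thus ?thesis using block_inv_xy_c2_pair[of 0 L "j - q" 0 "L - q"] j by simp
next
  case c2_popped
  thus ?thesis using block_inv_replicate_SY[of "L - j" L] j by (cases "j = L") auto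
qed

lemma block_inv_after_half_block:
  assumes inv: "half_block_inv L S" and L: "1 \<le> L" and run: "queue_run S (v_blk L) S'"
  shows "block_inv (Suc L) S'"
proof -
  have S: "S \<noteq> []" "well_shaped S" "xy_runs_le L S" "odd (count_list S SC2)"
    using inv by (simp_all add: half_block_inv_def)
  from inv consider "short_front L (strip_C1 S)"
    | j where "j < L" "S = SC1 # replicate L SX @ replicate j SY @ [SC2]"
    by (auto simp: half_block_inv_def)
  thus ?thesis
  proof cases
    case 1
    have "S' \<noteq> [] \<and> well_shaped S' \<and> xy_runs_le L S'"
      using queue_run_v_blk_short_front[OF S(1,2,3) 1 run] .
    moreover have "even (count_list S' SC2)"
      using queue_run_count_even[OF run, of SC2] S(4) by (simp add: v_blk_def)
    ultimately show ?thesis by (simp add: block_inv_def)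
  next
    case (2 j)
    have "j \<noteq> 0"
    proof
      assume "j = 0"
      hence "successively adj_ok (replicate L SX @ [SC2])"
        using S(2) 2(2) by (simp add: well_shaped_def successively_Cons)
      thus False using L not_successively_replicate_SX_SC2 by fastforce
    qed
    thus ?thesis using block_inv_after_exceptional[of j L S'] 2 run by simp
  qed
qed

lemma queue_run_v_blk_twice:
  assumes Q: "Q = [] \<or> block_inv L Q" and L: "1 \<le> L" and run: "queue_run Q (v_blk L @ v_blk L) Q'"
  shows "Q' = [] \<or> block_inv (Suc L) Q'" and "Q \<noteq> [] \<Longrightarrow> block_inv (Suc L) Q'"
proof -
  obtain M where M: "queue_run Q (v_blk L) M" and Q': "queue_run M (v_blk L) Q'"
    using run by (auto simp: queue_run_append_iff)
  show "Q \<noteq> [] \<Longrightarrow> block_inv (Suc L) Q'"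
    using Q L M Q' half_block_inv_after_v_blk block_inv_after_half_block by blast
  have "Q' = [] \<or> block_inv (Suc L) Q'" if "Q = []"
  proof -
    have "queue_run (SC1 # replicate L SX @ replicate L SY @ [SC2]) (v_blk L) Q'"
      using Q' queue_run_Nil_v_blk[of L M] M that by (simp add: v_blk_def)
    thus ?thesis using block_inv_after_exceptional[of L L Q'] L by auto
  qed
  thus "Q' = [] \<or> block_inv (Suc L) Q'" using \<open>Q \<noteq> [] \<Longrightarrow> block_inv (Suc L) Q'\<close> by blast
qed

section \<open>Accepting computations\<close>

definition is_v_sym :: "sym \<Rightarrow> bool" where
  "is_v_sym c \<longleftrightarrow> c = SC1 \<or> c = SC2 \<or> c = SX \<or> c = SY"

lemma qstep_snd: "qstep w a b \<Longrightarrow> snd b = Suc (snd a)"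
  by (induction rule: qstep.induct) auto

locale accepting_computation =
  fixes w :: "sym list" and cs :: "(nat list \<times> nat) list"
  assumes accepting: "accepting_comp w cs"
begin

lemma cs_ne: "cs \<noteq> []" and hd_cs: "hd cs = ([], 0)" and last_cs: "last cs = ([], length w)"
  and qstep_cs: "\<And>k. Suc k < length cs \<Longrightarrow> qstep w (cs ! k) (cs ! Suc k)"
  using accepting by (auto simp: accepting_comp_def)

lemma snd_cs: "k < length cs \<Longrightarrow> snd (cs ! k) = k"
proof (induction k)
  case 0 thus ?case using hd_cs cs_ne by (simp add: hd_conv_nth[symmetric])
next
  case (Suc k) thus ?case using qstep_snd[OF qstep_cs[of k]] by simp
qed

lemma length_cs: "length cs = Suc (length w)"
proof -
  have "snd (last cs) = length cs - 1" using snd_cs cs_ne by (simp add: last_conv_nth)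
  thus ?thesis using last_cs cs_ne by (cases cs) auto
qed

lemma queue_first: "fst (cs ! 0) = []"
  using hd_cs cs_ne by (simp add: hd_conv_nth[symmetric])

lemma queue_last: "fst (cs ! length w) = []"
  using last_cs cs_ne length_cs by (simp add: last_conv_nth)

lemma queue_step:
  assumes k: "k < length w"
  shows "fst (cs ! Suc k) = fst (cs ! k) @ [k] \<or>
    (\<exists>q. fst (cs ! k) = q # fst (cs ! Suc k) \<and> w ! q = w ! k)"
proof -
  have "qstep w (cs ! k) (cs ! Suc k)" using qstep_cs k length_cs by simp
  moreover have "cs ! k = (fst (cs ! k), k)" using snd_cs[of k] k length_cs by (metis less_SucI prod.collapse)
  ultimately show ?thesis by (cases rule: qstep.cases) auto
qed

text \<open>They are only ever matched against
  \<open>v\<close>-symbols, so they evolve as a queue automaton reading the \<open>v\<close>-symbols of \<open>w\<close> alone.\<close>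

definition vqueue :: "nat \<Rightarrow> nat list" where
  "vqueue k = filter (\<lambda>p. is_v_sym (w ! p)) (fst (cs ! k))"

definition vsyms :: "nat \<Rightarrow> sym list" where
  "vsyms k = map ((!) w) (vqueue k)"

lemma vqueue_first: "vqueue 0 = []"
  by (simp add: vqueue_def queue_first)

lemma vqueue_last: "vqueue (length w) = []"
  by (simp add: vqueue_def queue_last)

lemma vqueue_step:
  assumes "k < length w"
  shows "vqueue (Suc k) = vqueue k @ (if is_v_sym (w ! k) then [k] else []) \<or>
    (\<exists>q. fst (cs ! k) = q # fst (cs ! Suc k) \<and> w ! q = w ! k \<and>
       vqueue k = (if is_v_sym (w ! k) then q # vqueue (Suc k) else vqueue (Suc k)))"
  using queue_step[OF assms] by (auto simp: vqueue_def)

lemma queue_run_vsyms: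
  "i \<le> j \<Longrightarrow> j \<le> length w \<Longrightarrow> queue_run (vsyms i) (filter is_v_sym (take (j - i) (drop i w))) (vsyms j)"
proof (induction j)
  case 0 thus ?case by (simp add: queue_run.nil)
next
  case (Suc j)
  show ?case
  proof (cases "i = Suc j")
    case True thus ?thesis by (simp add: queue_run.nil)
  next
    case False
    hence ij: "i \<le> j" using Suc.prems by simp
    have "take (Suc j - i) (drop i w) = take (j - i) (drop i w) @ [w ! j]"
      using ij Suc.prems by (simp add: Suc_diff_le take_Suc_conv_app_nth)
    moreover have "queue_run (vsyms j) (filter is_v_sym [w ! j]) (vsyms (Suc j))"
      using vqueue_step[of j] Suc.prems by (auto simp: vsyms_def queue_run_single_iff queue_run.nil)
    ultimately show ?thesis
      using Suc.IH[OF ij] Suc.prems by (auto simp: queue_run_append_iff)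
  qed
qed

lemma length_vqueue_step:
  "k < length w \<Longrightarrow> length (vqueue (Suc k)) \<le> Suc (length (vqueue k)) \<and>
     length (vqueue k) \<le> Suc (length (vqueue (Suc k)))"
  using vqueue_step[of k] by (auto split: if_splits)

lemma vqueue_push:
  "k < length w \<Longrightarrow> length (vqueue (Suc k)) = Suc (length (vqueue k)) \<Longrightarrow> vqueue (Suc k) = vqueue k @ [k]"
  using vqueue_step[of k] by (auto split: if_splits)

lemma vqueue_pop:
  "k < length w \<Longrightarrow> length (vqueue k) = Suc (length (vqueue (Suc k))) \<Longrightarrow>
   \<exists>q. fst (cs ! k) = q # fst (cs ! Suc k) \<and> vqueue k = q # vqueue (Suc k)"
  using vqueue_step[of k] by (auto split: if_splits)

lemma vqueue_skip: "k < length w \<Longrightarrow> \<not> is_v_sym (w ! k) \<Longrightarrow> vqueue (Suc k) = vqueue k"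
  using vqueue_step[of k] by (auto split: if_splits)

lemma length_vqueue_diff:
  "t \<le> s \<Longrightarrow> i + s \<le> length w \<Longrightarrow>
   length (vqueue (i + s)) \<le> length (vqueue (i + t)) + (s - t) \<and>
   length (vqueue (i + t)) \<le> length (vqueue (i + s)) + (s - t)"
proof (induction s)
  case (Suc s)
  show ?case
  proof (cases "t = Suc s")
    case False
    hence "t \<le> s" using Suc.prems by simp
    thus ?thesis using Suc length_vqueue_step[of "i + s"] by fastforce
  qed simp
qed simp

lemma vqueue_skip_interval:
  "(\<forall>t<n. \<not> is_v_sym (w ! (i + t))) \<Longrightarrow> i + n \<le> length w \<Longrightarrow> vqueue (i + n) = vqueue i"
  by (induction n) (auto simp: vqueue_skip)

lemma vqueue_push_interval:
  assumes empty: "vqueue i = []" and len: "i + n \<le> length w" and full: "length (vqueue (i + n)) = n"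
  shows "vqueue (i + n) = [i..<i + n]"
proof -
  have L: "length (vqueue (i + t)) = t" if "t \<le> n" for t
  proof -
    have "length (vqueue (i + t)) \<le> length (vqueue (i + 0)) + (t - 0)"
      "length (vqueue (i + n)) \<le> length (vqueue (i + t)) + (n - t)"
      using length_vqueue_diff[of 0 t i] length_vqueue_diff[of t n i] that len by auto
    thus ?thesis using empty full that by simp
  qed
  have "t \<le> n \<Longrightarrow> vqueue (i + t) = [i..<i + t]" for t
  proof (induction t)
    case (Suc t)
    hence "vqueue (Suc (i + t)) = vqueue (i + t) @ [i + t]"
      using vqueue_push[of "i + t"] L[of t] L[of "Suc t"] len by simp
    thus ?case using Suc by simp
  qed (simp add: empty)
  thus ?thesis by simp
qed

lemma vqueue_pop_interval:
  assumes full: "vqueue i = [i0..<i0 + n]" and len: "i + n \<le> length w" and empty: "vqueue (i + n) = []"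
  shows "\<forall>t<n. fst (cs ! (i + t)) = (i0 + t) # fst (cs ! Suc (i + t))"
proof -
  have L: "length (vqueue (i + t)) = n - t" if "t \<le> n" for t
  proof -
    have "length (vqueue (i + 0)) \<le> length (vqueue (i + t)) + (t - 0)"
      "length (vqueue (i + t)) \<le> length (vqueue (i + n)) + (n - t)"
      using length_vqueue_diff[of 0 t i] length_vqueue_diff[of t n i] that len by auto
    thus ?thesis using empty full that by simp
  qed
  have pop: "\<exists>q. fst (cs ! (i + t)) = q # fst (cs ! Suc (i + t)) \<and> vqueue (i + t) = q # vqueue (Suc (i + t))"
    if "t < n" for t
    using vqueue_pop[of "i + t"] L[of t] L[of "Suc t"] that len by simp
  have R: "t \<le> n \<Longrightarrow> vqueue (i + t) = [i0 + t..<i0 + n]" for t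
  proof (induction t)
    case (Suc t)
    thus ?case using pop[of t] by (auto simp: upt_conv_Cons)
  qed (simp add: full)
  show ?thesis
  proof (intro allI impI)
    fix t assume "t < n"
    thus "fst (cs ! (i + t)) = (i0 + t) # fst (cs ! Suc (i + t))"
      using pop[of t] R[of t] by (auto simp: upt_conv_Cons)
  qed
qed

lemma matchedI: "k < length w \<Longrightarrow> fst (cs ! k) = p # fst (cs ! Suc k) \<Longrightarrow> matched cs p k"
  unfolding matched_def using snd_cs[of k] length_cs by (intro exI[of _ k]) simp

end

section \<open>Words made of blocks \<open>v\<^sub>l Z\<^sub>l v\<^sub>l\<close>\<close>

definition vblock :: "(nat \<Rightarrow> sym list) \<Rightarrow> nat \<Rightarrow> sym list" where
  "vblock Z l = v_blk l @ Z l @ v_blk l"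

definition vword :: "sym list \<Rightarrow> (nat \<Rightarrow> sym list) \<Rightarrow> nat \<Rightarrow> sym list" where
  "vword P Z N = P @ concat (map (vblock Z) [1..<N+1])"

definition vstart :: "sym list \<Rightarrow> (nat \<Rightarrow> sym list) \<Rightarrow> nat \<Rightarrow> nat" where
  "vstart P Z l = length P + length (concat (map (vblock Z) [1..<l]))"

lemma vstart_1: "vstart P Z (Suc 0) = length P"
  by (simp add: vstart_def)

lemma vstart_Suc: "1 \<le> l \<Longrightarrow> vstart P Z (Suc l) = vstart P Z l + length (vblock Z l)"
  by (simp add: vstart_def)

lemma vstart_last: "vstart P Z (Suc N) = length (vword P Z N)"
  by (simp add: vstart_def vword_def)

lemma vword_Suc: "vword P Z (Suc N) = vword P Z N @ vblock Z (Suc N)"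
  by (simp add: vword_def)

lemma drop_vstart:
  assumes "1 \<le> l" "l \<le> N"
  shows "drop (vstart P Z l) (vword P Z N) = vblock Z l @ drop (vstart P Z (Suc l)) (vword P Z N)"
    and "vstart P Z (Suc l) \<le> length (vword P Z N)"
proof -
  define A where "A = P @ concat (map (vblock Z) [1..<l])"
  define C where "C = concat (map (vblock Z) [Suc l..<N+1])"
  have "[1..<N+1] = [1..<l] @ l # [Suc l..<N+1]"
    using assms upt_add_eq_append[of 1 l "N + 1 - l"] by (simp add: upt_conv_Cons)
  hence W: "vword P Z N = A @ vblock Z l @ C" by (simp add: vword_def A_def C_def)
  have A: "length A = vstart P Z l" by (simp add: vstart_def A_def)
  hence "vstart P Z (Suc l) = length A + length (vblock Z l)" using vstart_Suc[OF assms(1)] by simp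
  thus "drop (vstart P Z l) (vword P Z N) = vblock Z l @ drop (vstart P Z (Suc l)) (vword P Z N)"
    "vstart P Z (Suc l) \<le> length (vword P Z N)"
    using W A by simp_all
qed

lemma filter_v_blk: "filter is_v_sym (v_blk l) = v_blk l"
  by (simp add: v_blk_def is_v_sym_def)

locale vword_computation = accepting_computation +
  fixes P :: "sym list" and Z :: "nat \<Rightarrow> sym list" and N :: nat
  assumes w_eq: "w = vword P Z N"
    and P_no_v_sym: "\<forall>c\<in>set P. \<not> is_v_sym c"
    and Z_no_v_sym: "\<forall>c\<in>set (Z l). \<not> is_v_sym c"
begin

lemma queue_run_vblock:
  assumes "1 \<le> l" "l \<le> N"
  shows "queue_run (vsyms (vstart P Z l)) (v_blk l @ v_blk l) (vsyms (vstart P Z (Suc l)))"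
proof -
  have "take (vstart P Z (Suc l) - vstart P Z l) (drop (vstart P Z l) w) = vblock Z l"
    using drop_vstart[OF assms] vstart_Suc[OF assms(1)] w_eq by simp
  moreover have "filter is_v_sym (vblock Z l) = v_blk l @ v_blk l"
    using Z_no_v_sym[of l] by (simp add: vblock_def filter_v_blk filter_empty_conv)
  ultimately show ?thesis
    using queue_run_vsyms[of "vstart P Z l" "vstart P Z (Suc l)"] drop_vstart(2)[OF assms]
      vstart_Suc[OF assms(1)] w_eq by simp
qed

lemma vsyms_vstart_1: "vsyms (vstart P Z 1) = []"
proof -
  have "queue_run (vsyms 0) (filter is_v_sym (take (length P) w)) (vsyms (length P))"
    using queue_run_vsyms[of 0 "length P"] w_eq by (simp add: vword_def)
  moreover have "filter is_v_sym (take (length P) w) = []"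
    using w_eq P_no_v_sym by (simp add: vword_def filter_empty_conv)
  ultimately show ?thesis using vqueue_first by (simp add: queue_run_Nil_iff vsyms_def vstart_1)
qed

lemma vsyms_vstart_cases:
  "1 \<le> l \<Longrightarrow> l \<le> Suc N \<Longrightarrow> vsyms (vstart P Z l) = [] \<or> block_inv l (vsyms (vstart P Z l))"
proof (induction l rule: dec_induct)
  case base thus ?case using vsyms_vstart_1 by simp
next
  case (step l)
  thus ?case using queue_run_v_blk_twice(1)[OF _ step.hyps(1) queue_run_vblock] by simp
qed

lemma block_inv_vstart_mono:
  "l \<le> l' \<Longrightarrow> 1 \<le> l \<Longrightarrow> l' \<le> Suc N \<Longrightarrow> block_inv l (vsyms (vstart P Z l)) \<Longrightarrow>
   block_inv l' (vsyms (vstart P Z l'))"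
proof (induction l' rule: dec_induct)
  case (step l')
  thus ?case using queue_run_v_blk_twice(2)[OF _ _ queue_run_vblock, of l'] by (simp add: block_inv_def)
qed simp

text \<open>A queue of \<open>v\<close>-symbols nonempty at some block start would still be nonempty at the end.\<close>

lemma vqueue_vstart: "1 \<le> l \<Longrightarrow> l \<le> Suc N \<Longrightarrow> vqueue (vstart P Z l) = []"
proof -
  assume l: "1 \<le> l" "l \<le> Suc N"
  have "vstart P Z (Suc N) = length w" using vstart_last w_eq by simp
  hence "vsyms (vstart P Z (Suc N)) = []" using vqueue_last by (simp add: vsyms_def)
  hence "\<not> block_inv l (vsyms (vstart P Z l))"
    using block_inv_vstart_mono[OF l(2,1)] by (auto simp: block_inv_def)
  thus ?thesis using vsyms_vstart_cases[OF l] by (simp add: vsyms_def)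
qed

text \<open>Block \<open>l\<close> starts with an empty queue of \<open>v\<close>-symbols, so its first \<open>v\<^sub>l\<close> is pushed
  completely, kept while \<open>Z l\<close> is read, and popped completely by its second \<open>v\<^sub>l\<close>.\<close>

lemma matched_vblock:
  assumes l: "1 \<le> l" "l \<le> N" and j: "j < length (v_blk l)"
  shows "matched cs (vstart P Z l + j) (vstart P Z l + length (v_blk l) + length (Z l) + j)"
proof -
  define i V where "i = vstart P Z l" and "V = length (v_blk l)"
  have dr: "drop i w = v_blk l @ Z l @ v_blk l @ drop (vstart P Z (Suc l)) w"
    using drop_vstart(1)[OF l] w_eq by (simp add: i_def vblock_def)
  have len: "i + V + length (Z l) + V \<le> length w"
    using drop_vstart(2)[OF l, of P Z] vstart_Suc[OF l(1), of P Z] w_eq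
    by (simp add: vblock_def i_def V_def add.assoc)
  have empty: "vqueue i = []" "vqueue (i + V + length (Z l) + V) = []"
    using vqueue_vstart[of l] vqueue_vstart[of "Suc l"] vstart_Suc[OF l(1), of P Z] l
    by (simp_all add: i_def V_def vblock_def add.assoc)
  have "queue_run (vsyms i) (filter is_v_sym (take V (drop i w))) (vsyms (i + V))"
    using queue_run_vsyms[of i "i + V"] len by simp
  hence "queue_run [] (v_blk l) (vsyms (i + V))"
    using dr empty(1) by (simp add: V_def vsyms_def filter_v_blk)
  hence "length (vqueue (i + V)) = V"
    using queue_run_Nil_v_blk by (metis V_def length_map vsyms_def)
  hence "vqueue (i + V) = [i..<i + V]" using vqueue_push_interval[OF empty(1)] len by simp
  moreover have "\<not> is_v_sym (w ! (i + V + t))" if "t < length (Z l)" for t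
  proof -
    have "w ! (i + V + t) = drop i w ! (V + t)" using len by (simp add: add.assoc)
    thus ?thesis using dr that Z_no_v_sym[of l] by (simp add: V_def nth_append)
  qed
  ultimately have "vqueue (i + V + length (Z l)) = [i..<i + V]"
    using vqueue_skip_interval[of "length (Z l)" "i + V"] len by simp
  hence "fst (cs ! (i + V + length (Z l) + j)) = (i + j) # fst (cs ! Suc (i + V + length (Z l) + j))"
    using vqueue_pop_interval[of "i + V + length (Z l)" i V] empty(2) len j by (simp add: V_def)
  thus ?thesis using matchedI len j by (simp add: i_def V_def add.assoc)
qed

end

lemma length_v_blk: "length (v_blk l) = 2 * l + 2"
  by (simp add: v_blk_def)

lemma nth_v_blk:
  "i < length (v_blk l) \<Longrightarrow>
   v_blk l ! i = (if i = 0 then SC1 else if i \<le> l then SX else if i \<le> 2 * l then SY else SC2)"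
  by (auto simp: v_blk_def nth_append nth_Cons')

lemma v_blk_prefix_eq:
  assumes l: "1 \<le> l" "1 \<le> l'" and prefix: "take (length (v_blk l)) (v_blk l' @ post) = v_blk l"
  shows "l = l'"
proof (rule ccontr)
  assume "l \<noteq> l'"
  define k where "k = Suc (min l l')"
  have k: "k < length (v_blk l)" "k < length (v_blk l')" using l by (auto simp: k_def length_v_blk)
  have "v_blk l ! k = (v_blk l' @ post) ! k"
    using nth_take[OF k(1), of "v_blk l' @ post"] unfolding prefix .
  also have "\<dots> = v_blk l' ! k" using k(2) by (rule nth_append_left)
  finally have "v_blk l ! k = v_blk l' ! k" .
  thus False using \<open>l \<noteq> l'\<close> l \<open>k < length (v_blk l)\<close> \<open>k < length (v_blk l')\<close>
    by (auto simp: nth_v_blk k_def min_def split: if_splits)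
qed

lemma nth_vblock_SC1:
  assumes Z: "SC1 \<notin> set (Z l)" and k: "k < length (vblock Z l)" "vblock Z l ! k = SC1"
  shows "k = 0 \<or> k = length (v_blk l) + length (Z l)"
proof -
  consider "k < length (v_blk l)"
    | "length (v_blk l) \<le> k" "k < length (v_blk l) + length (Z l)"
    | "length (v_blk l) + length (Z l) \<le> k"
    by linarith
  thus ?thesis
  proof cases
    case 1
    thus ?thesis using k(2) by (simp add: vblock_def nth_append nth_v_blk split: if_splits)
  next
    case 2
    hence "k - length (v_blk l) < length (Z l)" by linarith
    hence "Z l ! (k - length (v_blk l)) = SC1" using 2 k(2) by (simp add: vblock_def nth_append)
    thus ?thesis using \<open>k - length (v_blk l) < length (Z l)\<close> Z nth_mem by metis
  next
    case 3
    hence "\<not> k < length (v_blk l)" "\<not> k - length (v_blk l) < length (Z l)" by linarith+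
    hence "v_blk l ! (k - length (v_blk l) - length (Z l)) = SC1"
      "k - length (v_blk l) - length (Z l) < length (v_blk l)"
      using k 3 by (simp_all add: vblock_def nth_append del: diff_diff_left)
    thus ?thesis using 3 by (simp add: nth_v_blk split: if_splits)
  qed
qed

lemma nth_vword_SC1:
  assumes P: "SC1 \<notin> set P" and Z: "\<And>l. SC1 \<notin> set (Z l)"
  shows "k < length (vword P Z N) \<Longrightarrow> vword P Z N ! k = SC1 \<Longrightarrow>
    \<exists>l. 1 \<le> l \<and> l \<le> N \<and> (k = vstart P Z l \<or> k = vstart P Z l + length (v_blk l) + length (Z l))"
proof (induction N)
  case 0
  thus ?case using P nth_mem[of k P] by (simp add: vword_def)
next
  case (Suc N)
  show ?case
  proof (cases "k < length (vword P Z N)")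
    case True
    thus ?thesis using Suc by (force simp: vword_Suc nth_append)
  next
    case False
    define k' where "k' = k - vstart P Z (Suc N)"
    have "k' < length (vblock Z (Suc N))" "vblock Z (Suc N) ! k' = SC1"
      using Suc.prems False by (simp_all add: k'_def vstart_last vword_Suc nth_append)
    hence "k' = 0 \<or> k' = length (v_blk (Suc N)) + length (Z (Suc N))"
      using nth_vblock_SC1 Z by blast
    moreover have "k = vstart P Z (Suc N) + k'" using False by (simp add: k'_def vstart_last)
    ultimately show ?thesis by (intro exI[of _ "Suc N"]) auto
  qed
qed

lemma occs_iff_drop:
  assumes "u \<noteq> []"
  shows "p \<in> occs u W \<longleftrightarrow> (\<exists>R. drop p W = u @ R)"
proof
  assume "p \<in> occs u W"
  hence "take (length u) (drop p W) = u" by (simp add: occs_def)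
  hence "drop p W = u @ drop (length u) (drop p W)" by (metis append_take_drop_id)
  thus "\<exists>R. drop p W = u @ R" ..
next
  assume "\<exists>R. drop p W = u @ R"
  then obtain R where R: "drop p W = u @ R" ..
  hence "length u \<le> length W - p" using length_drop[of p W] by simp
  hence "p + length u \<le> length W" using assms by (cases u) auto
  thus "p \<in> occs u W" using R by (simp add: occs_def)
qed

lemma drop_vstart_v_blk:
  assumes "1 \<le> l" "l \<le> N"
  shows "\<exists>R. drop (vstart P Z l) (vword P Z N) = v_blk l @ R"
    and "\<exists>R. drop (vstart P Z l + length (v_blk l) + length (Z l)) (vword P Z N) = v_blk l @ R"
proof -
  obtain R where R: "drop (vstart P Z l) (vword P Z N) = v_blk l @ Z l @ v_blk l @ R"
    using drop_vstart(1)[OF assms, of P Z] by (simp add: vblock_def)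
  have "drop (vstart P Z l + length (v_blk l) + length (Z l)) (vword P Z N) =
      drop (length (v_blk l) + length (Z l)) (drop (vstart P Z l) (vword P Z N))"
    by (simp add: add.commute add.left_commute)
  thus "\<exists>R. drop (vstart P Z l) (vword P Z N) = v_blk l @ R"
    "\<exists>R. drop (vstart P Z l + length (v_blk l) + length (Z l)) (vword P Z N) = v_blk l @ R"
    using R by auto
qed

lemma occs_v_blk_vword:
  assumes P: "SC1 \<notin> set P" and Z: "\<And>l. SC1 \<notin> set (Z l)" and l: "1 \<le> l" "l \<le> N"
  shows "occs (v_blk l) (vword P Z N) = {vstart P Z l, vstart P Z l + length (v_blk l) + length (Z l)}"
proof -
  let ?W = "vword P Z N"
  have v_blk: "v_blk l \<noteq> []" by (simp add: v_blk_def)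
  show ?thesis
  proof
    show "{vstart P Z l, vstart P Z l + length (v_blk l) + length (Z l)} \<subseteq> occs (v_blk l) ?W"
      using drop_vstart_v_blk[OF l] occs_iff_drop[OF v_blk] by auto
  next
    show "occs (v_blk l) ?W \<subseteq> {vstart P Z l, vstart P Z l + length (v_blk l) + length (Z l)}"
    proof
      fix p assume "p \<in> occs (v_blk l) ?W"
      then obtain R where R: "drop p ?W = v_blk l @ R" using occs_iff_drop[OF v_blk] by blast
      hence "drop p ?W \<noteq> []" by (simp add: v_blk_def)
      hence p: "p < length ?W" by simp
      hence "?W ! p = hd (drop p ?W)" by (simp add: hd_drop_conv_nth)
      hence "?W ! p = SC1" using R by (simp add: v_blk_def)
      then obtain l' where l': "1 \<le> l'" "l' \<le> N"
        and p: "p = vstart P Z l' \<or> p = vstart P Z l' + length (v_blk l') + length (Z l')"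
        using nth_vword_SC1[OF P Z p] by blast
      then obtain R' where "drop p ?W = v_blk l' @ R'" using drop_vstart_v_blk[OF l'] by blast
      hence "take (length (v_blk l)) (v_blk l' @ R') = v_blk l" using R by (metis append_eq_conv_conj)
      hence "l = l'" using v_blk_prefix_eq l(1) l'(1) by blast
      thus "p \<in> {vstart P Z l, vstart P Z l + length (v_blk l) + length (Z l)}" using p by simp
    qed
  qed
qed

lemma first_second_occ: "a < b \<Longrightarrow> occs u W = {a, b} \<Longrightarrow> first_occ u W = a \<and> second_occ u W = b"
  by (simp add: first_occ_def second_occ_def insert_Diff_if)

context vword_computation
begin

lemma matched_v_blk_occs:
  assumes l: "1 \<le> l" "l \<le> N" and j: "j < length (v_blk l)"
  shows "matched cs (first_occ (v_blk l) w + j) (second_occ (v_blk l) w + j)"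
proof -
  have "SC1 \<notin> set P" "\<And>l. SC1 \<notin> set (Z l)"
    using P_no_v_sym Z_no_v_sym by (auto simp: is_v_sym_def)
  hence "occs (v_blk l) w = {vstart P Z l, vstart P Z l + length (v_blk l) + length (Z l)}"
    using occs_v_blk_vword l w_eq by simp
  hence "first_occ (v_blk l) w = vstart P Z l \<and>
         second_occ (v_blk l) w = vstart P Z l + length (v_blk l) + length (Z l)"
    by (intro first_second_occ) (auto simp: length_v_blk)
  thus ?thesis using matched_vblock[OF l j] by simp
qed

end

text \<open>\<open>Ver\<^sub>S\<close> consists of the blocks \<open>v\<^sub>l Z\<^sub>l v\<^sub>l\<close>, \<open>1 \<le> l \<le> 12m\<close>, with
  \<open>Z\<^sub>4\<^sub>k\<^sub>-\<^sub>3 = Z\<^sub>4\<^sub>k\<^sub>-\<^sub>2 = D\<^sub>k\<close>, \<open>Z\<^sub>4\<^sub>k\<^sub>-\<^sub>1 = E\<^sub>k\<close> and \<open>Z\<^sub>4\<^sub>k = F\<^sub>k\<close>.\<close>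

definition ver_filler :: "nat \<Rightarrow> nat list \<Rightarrow> nat \<Rightarrow> sym list" where
  "ver_filler m ns l = (if l mod 4 = 1 \<or> l mod 4 = 2 then D_blk m ns ((l + 3) div 4)
     else if l mod 4 = 3 then E_blk m ns ((l + 3) div 4) else F_blk m ns ((l + 3) div 4))"

lemma ver_filler_simps:
  "ver_filler m ns (4 * k + 1) = D_blk m ns (Suc k)"
  "ver_filler m ns (4 * k + 2) = D_blk m ns (Suc k)"
  "ver_filler m ns (4 * k + 3) = E_blk m ns (Suc k)"
  "ver_filler m ns (4 * k + 4) = F_blk m ns (Suc k)"
proof -
  have "(4 * k + 1) mod 4 = 1" "(4 * k + 2) mod 4 = 2" "(4 * k + 3) mod 4 = 3" "(4 * k + 4) mod 4 = 0"
    "(4 * k + 1 + 3) div 4 = Suc k" "(4 * k + 2 + 3) div 4 = Suc k" "(4 * k + 3 + 3) div 4 = Suc k"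
    "(4 * k + 4 + 3) div 4 = Suc k"
    by presburger+
  thus "ver_filler m ns (4 * k + 1) = D_blk m ns (Suc k)"
    "ver_filler m ns (4 * k + 2) = D_blk m ns (Suc k)"
    "ver_filler m ns (4 * k + 3) = E_blk m ns (Suc k)"
    "ver_filler m ns (4 * k + 4) = F_blk m ns (Suc k)"
    unfolding ver_filler_def by simp_all
qed

lemma Ver_eq_vblocks: "Ver m ns = concat (map (vblock (ver_filler m ns)) [1..<12 * m + 1])"
proof -
  let ?f = "\<lambda>k. v_blk (4*k-3) @ D_blk m ns k @ v_blk (4*k-3) @
       v_blk (4*k-2) @ D_blk m ns k @ v_blk (4*k-2) @
       v_blk (4*k-1) @ E_blk m ns k @ v_blk (4*k-1) @
       v_blk (4*k)   @ F_blk m ns k @ v_blk (4*k)"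
  have "concat (map ?f [1..<M+1]) = concat (map (vblock (ver_filler m ns)) [1..<4*M+1])" for M
  proof (induction M)
    case (Suc M)
    have "[1..<4 * Suc M + 1] = [1..<4*M+1] @ [4*M+1, 4*M+2, 4*M+3, 4*M+4]"
      using upt_add_eq_append[of 1 "4*M+1" 4] by (simp add: upt_rec)
    moreover have "?f (Suc M) = vblock (ver_filler m ns) (4*M+1) @ vblock (ver_filler m ns) (4*M+2) @
        vblock (ver_filler m ns) (4*M+3) @ vblock (ver_filler m ns) (4*M+4)"
      unfolding vblock_def ver_filler_simps by (simp add: numeral_eq_Suc)
    ultimately show ?case using Suc.IH by simp
  qed simp
  from this[of "3 * m"] show ?thesis by (simp add: Ver_def)
qed

lemma set_pw: "set (pw u i) \<subseteq> set u"
  by (auto simp: pw_def)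

lemma no_v_sym_pw_U_blk: "c \<in> set (pw (U_blk n) i) \<Longrightarrow> \<not> is_v_sym c"
  using set_pw[of "U_blk n" i] by (auto simp: U_blk_def is_v_sym_def)

lemma no_v_sym_ver_filler: "\<forall>c\<in>set (ver_filler m ns l). \<not> is_v_sym c"
  by (auto simp: ver_filler_def D_blk_def E_blk_def F_blk_def is_v_sym_def dest: no_v_sym_pw_U_blk)

lemma no_v_sym_Load_Dist: "\<forall>c\<in>set (Load m ns @ Dist m ns). \<not> is_v_sym c"
  using set_pw[of "[SA1] @ replicate (bound_B m ns) SB @ [SA2]" 3]
  by (auto simp: Load_def Dist_def is_v_sym_def)

lemma w_S_eq_vword: "w_S m ns = vword (Load m ns @ Dist m ns) (ver_filler m ns) (12 * m)"
  by (simp add: w_S_def vword_def Ver_eq_vblocks)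

theorem theorem2:
  assumes "three_partition_instance m ns"
      and "accepting_comp (w_S m ns) cs"
  shows "V_condition m ns cs"
proof -
  interpret vword_computation "w_S m ns" cs "Load m ns @ Dist m ns" "ver_filler m ns" "12 * m"
    using assms(2) w_S_eq_vword no_v_sym_Load_Dist no_v_sym_ver_filler by unfold_locales auto
  show ?thesis unfolding V_condition_def using matched_v_blk_occs by blast
qed

end
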